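(* Let $I=(m_1,\dots,m_k,T_1,\dots,T_n)$ be an instance of the VSPA problem with $0<m_1\le m_2\le\dots\le m_k$, $n=\sum_r m_r$, $T_i\in\{H,L\}$ for all $i$ where $0\le H<L$, and $T_1=L$, and let $g$ be a nondecreasing function. Then for every valid decision sequence $\mathbf{x}=(x_1,\dots,x_n)$ with $x_1>1$ there exists a valid decision sequence $\mathbf{x}^*=(1,x^*_2,\dots,x^*_n)$ with $\mathrm{COST}_I(\mathbf{x}^* )\le\mathrm{COST}_I(\mathbf{x})$.
   Context: Variable-Sized Positional Allocation (VSPA) problem: an instance consists of capacities $m_1,\dots,m_k$ (positive integers) and intrinsic task costs $T_1,\dots,T_n\ge 0$ with $n=\sum_r m_r$, together with a nondecreasing function $g:\mathbb{N}\to\mathbb{R}_{\ge0}$ (in the original problem $g(q)=f(m+1-q)$ for a nonincreasing positional function $f$). A decision sequence $\mathbf{x}\in[k]^n$ assigns task $t$ to agent $x_t$; it is valid if each agent $r$ receives exactly $m_r$ tasks. When task $t$ is assigned, agent $x_t$ has remaining capacity $q_t=m_{x_t}-|\{s<t: x_s=x_t\}|$, and the assignment costs $g(q_t)\cdot T_t$. The total cost is $\mathrm{COST}_I(\mathbf{x})=\sum_{t=1}^n g(q_t)\,T_t$. *)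

theory Defs
  imports Complex_Main
begin

text \<open>A decision sequence is x :: nat => nat, where x t is the
agent receiving task t (only the values on 1..n matter).\<close>

definition valid_seq :: "nat \<Rightarrow> (nat \<Rightarrow> nat) \<Rightarrow> nat \<Rightarrow> (nat \<Rightarrow> nat) \<Rightarrow> bool" where
  "valid_seq k m n x \<longleftrightarrow>
     (\<forall>t\<in>{1..n}. x t \<in> {1..k}) \<and>
     (\<forall>r\<in>{1..k}. card {t\<in>{1..n}. x t = r} = m r)"

definition rem_cap :: "(nat \<Rightarrow> nat) \<Rightarrow> (nat \<Rightarrow> nat) \<Rightarrow> nat \<Rightarrow> nat" where
  "rem_cap m x t = m (x t) - card {s\<in>{1..<t}. x s = x t}"

definition vspa_cost :: "(nat \<Rightarrow> real) \<Rightarrow> (nat \<Rightarrow> nat) \<Rightarrow> nat \<Rightarrow> (nat \<Rightarrow> real) \<Rightarrow> (nat \<Rightarrow> nat) \<Rightarrow> real" where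
  "vspa_cost g m n T x = (\<Sum>t=1..n. g (rem_cap m x t) * T t)"

end

theory Submission
  imports Defs "HOL-Combinatorics.Transposition"
begin

text \<open>Let \<open>a = x\<^sub>1\<close> and let \<open>j\<close> be the first task of agent 1. Swapping tasks 1 and \<open>j\<close> between the
  two agents makes each task of \<open>a\<close> in between one step of \<open>g\<close> more expensive; these increments
  telescope and are paid for by the saving on task 1, whose intrinsic cost \<open>L\<close> is maximal, as long
  as \<open>m\<^sub>1\<close> exceeds the remaining capacity of \<open>a\<close> at \<open>j\<close> by at most one. Otherwise the remaining
  capacity of \<open>a\<close>, which starts at \<open>m\<^sub>a \<ge> m\<^sub>1\<close> and drops by one per task, equals \<open>m\<^sub>1\<close> at some
  earlier task \<open>\<tau>\<close> of \<open>a\<close>. From \<open>\<tau>\<close> on the two agents are interchangeable, so exchanging their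
  labels there costs nothing and yields a sequence to which the swap applies at \<open>\<tau>\<close>.\<close>

definition count_from :: "nat \<Rightarrow> (nat \<Rightarrow> nat) \<Rightarrow> nat \<Rightarrow> nat \<Rightarrow> nat" where
  "count_from n x r t = card {s\<in>{t..n}. x s = r}"

lemma count_from_split:
  assumes "t \<le> u" "u \<le> Suc n"
  shows "count_from n x r t = card {s\<in>{t..<u}. x s = r} + count_from n x r u"
proof -
  have "{s\<in>{t..n}. x s = r} = {s\<in>{t..<u}. x s = r} \<union> {s\<in>{u..n}. x s = r}"
    using assms by auto
  then show ?thesis
    unfolding count_from_def by (subst card_Un_disjoint[symmetric]) auto
qed

lemma count_from_Suc:
  assumes "t \<le> n"
  shows "count_from n x r t = of_bool (x t = r) + count_from n x r (Suc t)"
proof -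
  have "{s\<in>{t..<Suc t}. x s = r} = (if x t = r then {t} else {})" by auto
  then show ?thesis using count_from_split[of t "Suc t" n x r] assms by simp
qed

lemma count_from_cong:
  assumes "\<And>s. t \<le> s \<Longrightarrow> s \<le> n \<Longrightarrow> x s = y s"
  shows "count_from n x r t = count_from n y r t"
  unfolding count_from_def using assms by (intro arg_cong[where f = card]) auto

lemma count_from_eq_if_absent:
  assumes "\<And>s. t \<le> s \<Longrightarrow> s < u \<Longrightarrow> x s \<noteq> r" "t \<le> u" "u \<le> Suc n"
  shows "count_from n x r t = count_from n x r u"
proof -
  have "{s\<in>{t..<u}. x s = r} = {}" using assms(1) by auto
  then show ?thesis using count_from_split[OF assms(2,3)] by simp
qed

lemma count_from_fun_upd:
  assumes "t \<le> j" "j \<le> n"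
  shows "count_from n (x(j := a)) r t + of_bool (x j = r) = count_from n x r t + of_bool (a = r)"
proof -
  have "count_from n z r t = card {s\<in>{t..<j}. z s = r} + (of_bool (z j = r) + count_from n z r (Suc j))"
    for z using count_from_split[of t j n z r] count_from_Suc[of j n z r] assms by simp
  moreover have "count_from n (x(j := a)) r (Suc j) = count_from n x r (Suc j)"
    by (intro count_from_cong) auto
  moreover have "{s\<in>{t..<j}. (x(j := a)) s = r} = {s\<in>{t..<j}. x s = r}" by auto
  ultimately show ?thesis by simp
qed

lemma count_from_attains:
  assumes "t \<le> u" "u \<le> n" "count_from n x r u < c" "c \<le> count_from n x r t"
  shows "\<exists>\<tau>\<in>{t..<u}. x \<tau> = r \<and> count_from n x r \<tau> = c"
  using assms
proof (induction u rule: dec_induct)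
  case (step u)
  show ?case
  proof (cases "count_from n x r u < c")
    case True
    with step obtain \<tau> where "\<tau> \<in> {t..<u}" "x \<tau> = r" "count_from n x r \<tau> = c"
      by auto
    then show ?thesis by auto
  next
    case False
    have "count_from n x r u = of_bool (x u = r) + count_from n x r (Suc u)"
      using step.prems by (intro count_from_Suc) simp
    with False step.prems have "x u = r"
      by (cases "x u = r") auto
    with False step.prems \<open>count_from n x r u = _\<close> have "count_from n x r u = c"
      by simp
    then show ?thesis using \<open>x u = r\<close> \<open>t \<le> u\<close> by auto
  qed
qed simp

lemma valid_seq_count_from:
  assumes "valid_seq k m n x" "r \<in> {1..k}"
  shows "count_from n x r 1 = m r"
  using assms unfolding valid_seq_def count_from_def by simp

lemma valid_seq_if_count_from_eq:
  assumes "valid_seq k m n x" "\<forall>t\<in>{1..n}. y t \<in> {1..k}"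
    and "\<And>r. count_from n y r 1 = count_from n x r 1"
  shows "valid_seq k m n y"
  using assms unfolding valid_seq_def count_from_def by simp

lemma rem_cap_eq_count_from:
  assumes "valid_seq k m n x" "t \<in> {1..n}"
  shows "rem_cap m x t = count_from n x (x t) t"
proof -
  have "x t \<in> {1..k}" using assms unfolding valid_seq_def by auto
  then have "m (x t) = count_from n x (x t) 1" using valid_seq_count_from[OF assms(1)] by simp
  also have "\<dots> = card {s\<in>{1..<t}. x s = x t} + count_from n x (x t) t"
    using assms(2) by (intro count_from_split) auto
  finally show ?thesis unfolding rem_cap_def by simp
qed

lemma vspa_cost_eq_count_from:
  assumes "valid_seq k m n x"
  shows "vspa_cost g m n T x = (\<Sum>t=1..n. g (count_from n x (x t) t) * T t)"
  unfolding vspa_cost_def using rem_cap_eq_count_from[OF assms] by simp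

lemma valid_seq_first_occurrence:
  assumes "valid_seq k m n x" "r \<in> {1..k}" "0 < m r"
  obtains j where "j \<in> {1..n}" "x j = r" "\<And>s. 1 \<le> s \<Longrightarrow> s < j \<Longrightarrow> x s \<noteq> r"
proof -
  have "{t\<in>{1..n}. x t = r} \<noteq> {}"
    using assms unfolding valid_seq_def by (metis card.empty less_irrefl)
  then obtain j0 where "j0 \<in> {1..n} \<and> x j0 = r" by auto
  then have "\<exists>j. (j \<in> {1..n} \<and> x j = r) \<and> (\<forall>s<j. \<not> (s \<in> {1..n} \<and> x s = r))"
    by (intro exists_least_iff[THEN iffD1]) blast
  then show ?thesis using that by force
qed

lemma relabel_suffix:
  assumes valid: "valid_seq k m n x"
    and ab: "a \<in> {1..k}" "b \<in> {1..k}"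
    and \<tau>: "1 \<le> \<tau>" "\<tau> \<le> Suc n"
    and tie: "count_from n x a \<tau> = count_from n x b \<tau>"
  defines "y \<equiv> \<lambda>s. if \<tau> \<le> s then transpose a b (x s) else x s"
  shows "valid_seq k m n y" "vspa_cost g m n T y = vspa_cost g m n T x"
proof -
  have after: "count_from n y r t = count_from n x (transpose a b r) t" if "\<tau> \<le> t" for r t
  proof -
    have "{s\<in>{t..n}. y s = r} = {s\<in>{t..n}. x s = transpose a b r}"
      using that by (auto simp: y_def)
    then show ?thesis by (simp add: count_from_def)
  qed
  have before: "count_from n y r t = count_from n x r t" if "t \<le> \<tau>" for r t
  proof -
    have "count_from n x (transpose a b r) \<tau> = count_from n x r \<tau>"
      using tie by (auto simp: transpose_def)
    moreover have "{s\<in>{t..<\<tau>}. y s = r} = {s\<in>{t..<\<tau>}. x s = r}" by (auto simp: y_def)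
    ultimately show ?thesis
      using count_from_split[OF that \<tau>(2), of y r] count_from_split[OF that \<tau>(2), of x r]
        after[of \<tau> r] by simp
  qed
  have "\<forall>t\<in>{1..n}. y t \<in> {1..k}"
    using valid ab unfolding valid_seq_def y_def transpose_def by auto
  then show valid_y: "valid_seq k m n y"
    using valid_seq_if_count_from_eq[OF valid] before \<tau>(1) by blast
  have "count_from n y (y t) t = count_from n x (x t) t" for t
    using after[of t "y t"] before[of t "y t"] by (cases "\<tau> \<le> t") (auto simp: y_def)
  then show "vspa_cost g m n T y = vspa_cost g m n T x"
    by (simp add: vspa_cost_eq_count_from[OF valid] vspa_cost_eq_count_from[OF valid_y])
qed

lemma sum_telescope_weighted_le:
  fixes h w :: "nat \<Rightarrow> real"
  assumes "i \<le> j" and step: "\<And>t. i \<le> t \<Longrightarrow> t < j \<Longrightarrow> h (Suc t) \<le> h t \<and> w t \<le> c"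
  shows "(\<Sum>t=i..<j. (h t - h (Suc t)) * w t) \<le> c * (h i - h j)"
proof -
  have "(\<Sum>t=i..<j. (h t - h (Suc t)) * w t) \<le> (\<Sum>t=i..<j. (h t - h (Suc t)) * c)"
    using step by (intro sum_mono mult_left_mono) auto
  also have "\<dots> = c * - (\<Sum>t=i..<j. h (Suc t) - h t)"
    by (simp add: sum_distrib_left flip: sum_negf) (simp add: algebra_simps)
  also have "\<dots> = c * (h i - h j)"
    using sum_Suc_diff'[OF \<open>i \<le> j\<close>, of h] by simp
  finally show ?thesis .
qed

lemma sum_atLeastAtMost_pick_two:
  fixes f :: "nat \<Rightarrow> 'a::comm_monoid_add"
  assumes "i < j" "j \<le> n"
  shows "(\<Sum>t=i..n. f t) = f i + (\<Sum>t=Suc i..<j. f t) + f j + (\<Sum>t=Suc j..n. f t)"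
proof -
  have "{i..n} = {i..<j} \<union> {j..n}" using assms by auto
  then have "(\<Sum>t=i..n. f t) = (\<Sum>t=i..<j. f t) + (\<Sum>t=j..n. f t)"
    by (simp add: sum.union_disjoint[symmetric] ivl_disj_int)
  then show ?thesis
    using assms by (simp add: sum.atLeast_Suc_lessThan sum.atLeast_Suc_atMost add.assoc)
qed

lemma count_from_exchange:
  assumes j: "1 < j" "j \<le> n" and xa: "x 1 = a" and xb: "x j = b"
  defines "y \<equiv> x(1 := b, j := a)"
  shows count_from_exchange_before:
      "\<And>t. 1 < t \<Longrightarrow> t \<le> j \<Longrightarrow> count_from n y r t + of_bool (b = r) = count_from n x r t + of_bool (a = r)"
    and count_from_exchange_after: "\<And>t. j < t \<Longrightarrow> count_from n y r t = count_from n x r t"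
    and count_from_exchange_start: "count_from n y r 1 = count_from n x r 1"
proof -
  show before: "count_from n y r t + of_bool (b = r) = count_from n x r t + of_bool (a = r)"
    if "1 < t" "t \<le> j" for t
  proof -
    have "count_from n y r t = count_from n (x(j := a)) r t"
      using that by (intro count_from_cong) (auto simp: y_def)
    then show ?thesis using count_from_fun_upd[OF that(2) j(2), of x a r] xb by simp
  qed
  show "count_from n y r t = count_from n x r t" if "j < t" for t
    using that j by (intro count_from_cong) (auto simp: y_def)
  have "count_from n z r 1 = of_bool (z 1 = r) + count_from n z r 2" for z
    using count_from_Suc[of 1 n z r] j by (simp add: numeral_2_eq_2)
  then show "count_from n y r 1 = count_from n x r 1"
    using before[of 2] j xa by (simp add: y_def)
qed

lemma exchange_with_first_task:
  fixes g T :: "nat \<Rightarrow> real"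
  assumes valid: "valid_seq k m n x"
    and j: "1 < j" "j \<le> n"
    and xa: "x 1 = a" and xb: "x j = b" and ab: "a \<noteq> b"
    and first_b: "\<And>s. 1 \<le> s \<Longrightarrow> s < j \<Longrightarrow> x s \<noteq> b"
    and room: "count_from n x b 1 \<le> count_from n x a j + 1"
    and T_max: "\<forall>t\<in>{1..n}. T t \<le> T 1"
    and g_mono: "mono g"
  defines "y \<equiv> x(1 := b, j := a)"
  shows "valid_seq k m n y" "y 1 = b" "vspa_cost g m n T y \<le> vspa_cost g m n T x"
proof -
  show "y 1 = b" using j by (simp add: y_def)
  note before = count_from_exchange_before[OF j xa xb, folded y_def]
  note after = count_from_exchange_after[OF j xa xb, folded y_def]
  note start = count_from_exchange_start[OF j xa xb, folded y_def]
  have "\<forall>t\<in>{1..n}. y t \<in> {1..k}"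
    using valid j xa xb unfolding valid_seq_def y_def by auto
  then show valid_y: "valid_seq k m n y"
    using valid_seq_if_count_from_eq[OF valid] start by blast
  define F where "F z t = g (count_from n z (z t) t) * T t" for z t
  define \<alpha> where "\<alpha> t = count_from n x a t" for t
  define h where "h t = g (\<alpha> t + 1)" for t
  define B where "B = count_from n x b 1"
  have \<alpha>_Suc: "\<alpha> t = of_bool (x t = a) + \<alpha> (Suc t)" if "t \<le> n" for t
    unfolding \<alpha>_def using count_from_Suc[OF that] by simp
  have first: "F y 1 - F x 1 = (g B - h 2) * T 1"
    using start[of b] \<alpha>_Suc[of 1] j xa
    by (simp add: F_def B_def h_def \<alpha>_def y_def numeral_2_eq_2 algebra_simps)
  have at_j: "F y j - F x j = (h j - g B) * T j"
  proof -
    have "count_from n x b j = B"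
      unfolding B_def using first_b j by (intro count_from_eq_if_absent[symmetric]) auto
    then show ?thesis
      using before[OF j(1) order.refl, of a] j xb ab
      by (simp add: F_def h_def \<alpha>_def y_def algebra_simps)
  qed
  have middle: "F y t - F x t = (h t - h (Suc t)) * T t" if "1 < t" "t < j" for t
  proof -
    have "y t = x t" "x t \<noteq> b" using that first_b by (auto simp: y_def)
    then show ?thesis
      using before[of t "x t"] \<alpha>_Suc[of t] that j
      by (cases "x t = a") (simp_all add: F_def h_def \<alpha>_def algebra_simps)
  qed
  have tail: "F y t = F x t" if "j < t" for t
    using after[OF that] that j by (simp add: F_def y_def)
  have "(\<Sum>t=2..<j. F y t - F x t) \<le> T 1 * (h 2 - h j)"
  proof -
    have "h (Suc t) \<le> h t" if "t \<le> n" for t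
      using \<alpha>_Suc[OF that] g_mono unfolding h_def by (simp add: monoD)
    then have "(\<Sum>t=2..<j. (h t - h (Suc t)) * T t) \<le> T 1 * (h 2 - h j)"
      using j T_max by (intro sum_telescope_weighted_le) auto
    then show ?thesis using middle by (simp add: numeral_2_eq_2)
  qed
  moreover have "0 \<le> (T 1 - T j) * (h j - g B)"
    using T_max j g_mono room unfolding h_def \<alpha>_def B_def by (simp add: monoD)
  moreover have "vspa_cost g m n T z =
      F z 1 + (\<Sum>t=2..<j. F z t) + F z j + (\<Sum>t=Suc j..n. F z t)" if "valid_seq k m n z" for z
    using sum_atLeastAtMost_pick_two[OF j, of "F z"] vspa_cost_eq_count_from[OF that]
    by (simp add: F_def numeral_2_eq_2)
  ultimately show "vspa_cost g m n T y \<le> vspa_cost g m n T x"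
    using valid valid_y first at_j tail
    by (simp add: sum_subtractf algebra_simps)
qed

lemma exchange_after_relabelling:
  fixes g T :: "nat \<Rightarrow> real"
  assumes valid: "valid_seq k m n x"
    and ab: "a \<in> {1..k}" "b \<in> {1..k}" "a \<noteq> b"
    and xa: "x 1 = a"
    and j: "j \<le> n" "x j = b" and first_b: "\<And>s. 1 \<le> s \<Longrightarrow> s < j \<Longrightarrow> x s \<noteq> b"
    and \<tau>: "1 \<le> \<tau>" "\<tau> < j" "x \<tau> = a"
    and tie: "count_from n x a \<tau> = count_from n x b \<tau>"
    and T_max: "\<forall>t\<in>{1..n}. T t \<le> T 1"
    and g_mono: "mono g"
  shows "\<exists>z. valid_seq k m n z \<and> z 1 = b \<and> vspa_cost g m n T z \<le> vspa_cost g m n T x"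
proof -
  define y where "y s = (if \<tau> \<le> s then transpose a b (x s) else x s)" for s
  have valid_y: "valid_seq k m n y" and cost_y: "vspa_cost g m n T y = vspa_cost g m n T x"
    using relabel_suffix[OF valid ab(1,2) \<tau>(1) _ tie] \<tau> j unfolding y_def by auto
  show ?thesis
  proof (cases "\<tau> = 1")
    case True
    then have "y 1 = b" using xa by (simp add: y_def)
    then show ?thesis using valid_y cost_y by auto
  next
    case False
    have y1: "y 1 = a" using False \<tau>(1) xa by (simp add: y_def)
    have y\<tau>: "y \<tau> = b" using \<tau> by (simp add: y_def)
    have first_b': "y s \<noteq> b" if "1 \<le> s" "s < \<tau>" for s
      using first_b[of s] that \<tau> by (simp add: y_def)
    have "count_from n y b 1 = count_from n x b 1"
      using valid_seq_count_from[OF valid ab(2)] valid_seq_count_from[OF valid_y ab(2)] by simp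
    also have "\<dots> = count_from n x b \<tau>"
      using first_b \<tau> j by (intro count_from_eq_if_absent) auto
    also have "\<dots> = count_from n y a \<tau>"
      unfolding count_from_def y_def using ab(3)
      by (intro arg_cong[where f = card]) (auto simp: transpose_def)
    finally have room: "count_from n y b 1 \<le> count_from n y a \<tau> + 1" by simp
    show ?thesis
      using exchange_with_first_task[OF valid_y _ _ y1 y\<tau> ab(3) first_b' room T_max g_mono]
        False \<tau> j cost_y by fastforce
  qed
qed

theorem lemma6:
  fixes k n :: nat and m :: "nat \<Rightarrow> nat" and T :: "nat \<Rightarrow> real"
    and g :: "nat \<Rightarrow> real" and H L :: real and x :: "nat \<Rightarrow> nat"
  assumes k_pos: "k \<ge> 1"
    and m_pos: "\<forall>r\<in>{1..k}. 0 < m r"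
    and m_sorted: "\<forall>r\<in>{1..k}. \<forall>r'\<in>{1..k}. r \<le> r' \<longrightarrow> m r \<le> m r'"
    and n_def: "n = (\<Sum>r=1..k. m r)"
    and HL: "0 \<le> H" "H < L"
    and T_vals: "\<forall>i\<in>{1..n}. T i \<in> {H, L}"
    and T1: "T 1 = L"
    and g_mono: "mono g"
    and g_nonneg: "\<forall>q. 0 \<le> g q"
    and x_valid: "valid_seq k m n x"
    and x1: "x 1 > 1"
  shows "\<exists>xs. valid_seq k m n xs \<and> xs 1 = 1 \<and> vspa_cost g m n T xs \<le> vspa_cost g m n T x"
proof -
  define a where "a = x 1"
  have one: "(1::nat) \<in> {1..k}" using k_pos by simp
  obtain j where j: "j \<in> {1..n}" "x j = 1" and first_1: "\<And>s. 1 \<le> s \<Longrightarrow> s < j \<Longrightarrow> x s \<noteq> 1"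
    using valid_seq_first_occurrence[OF x_valid one] m_pos one by blast
  have a: "a \<in> {1..k}" "a \<noteq> 1" using x_valid j x1 unfolding a_def valid_seq_def by auto
  have j1: "1 < j" using j a(2) unfolding a_def by (cases "j = 1") auto
  have T_max: "\<forall>t\<in>{1..n}. T t \<le> T 1" using T_vals T1 HL by auto
  have count_1: "count_from n x 1 t = m 1" if "1 \<le> t" "t \<le> j" for t
    using count_from_eq_if_absent[of 1 t x 1 n] first_1 that j valid_seq_count_from[OF x_valid one]
    by simp
  show ?thesis
  proof (cases "count_from n x 1 1 \<le> count_from n x a j + 1")
    case True
    then show ?thesis
      using exchange_with_first_task[OF x_valid j1 _ a_def[symmetric] j(2) a(2) first_1 _ T_max g_mono] j
      by fastforce
  next
    case False
    have "m 1 \<le> count_from n x a 1"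
      using m_sorted one a valid_seq_count_from[OF x_valid a(1)] by simp
    then obtain \<tau> where "\<tau> \<in> {1..<j}" "x \<tau> = a" "count_from n x a \<tau> = m 1"
      using count_from_attains[of 1 j n x a "m 1"] False j count_1 by auto
    then show ?thesis
      using exchange_after_relabelling[OF x_valid a(1) one a(2) a_def[symmetric] _ j(2) first_1]
        count_1 j T_max g_mono by auto
  qed
qed

end
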